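(* Let $K$ be an infinite field and $n\ge 4$. Let $f\in K[x_1,\ldots,x_n]$ be of the form $f(x)=\lambda\,l_1(x)^{\alpha_1}\cdots l_k(x)^{\alpha_k}$, where $\lambda$ is a nonzero constant, $l_i(x)=\sum_{j=1}^n l_{ij}x_j$ are linear forms with $l_i$ not proportional to $l_j$ for $i\ne j$, and assume ( * ): the $k$ coefficients $l_{11},\ldots,l_{k1}$ are distinct and nonzero, and $l_{in}=1$ for all $i$. Then the following algorithm outputs a correct factorization of $f$ (equal to the given one up to a permutation of the factors): 1. For $j=2,\ldots,n-1$, let $g_j(x_1,x_j)=f\circ\pi_j$, where $\pi_j$ sends $x_n$ to $1$, leaves $x_1$ and $x_j$ unchanged and sets all other variables to $0$; compute the dense representation of each $g_j$ by interpolation. 2. Using a bivariate factorization algorithm, write each $g_j$ as $g_j(x_1,x_j)=\lambda\prod_{i=1}^k(a_{ij}x_1+b_{ij}x_j+1)^{\beta_{ij}}$. 3. Reorder the factors of the $g_j$ so that the tuples $(a_{1j},\ldots,a_{kj})$ are identical for all $j$, obtaining $g_j(x_1,x_j)=\lambda\prod_{i=1}^k(a_ix_1+c_{ij}x_j+1)^{\gamma_i}$ with exponents $\gamma_i$ independent of $j$. 4. Output $f(x_1,\ldots,x_n)=\lambda\prod_{i=1}^k(a_ix_1+c_{i2}x_2+\cdots+c_{i,n-1}x_{n-1}+x_n)^{\gamma_i}$.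
   Context: The bivariate factorization algorithm in step 2 returns the factorization of $g_j$ into irreducible factors with multiplicities over a field containing the coefficients of the $l_i$ (the statement includes the assertion that these factorizations have the displayed shape and that the reordering in step 3 is possible). *)

theory Defs
  imports "HOL-Computational_Algebra.Computational_Algebra"
begin

text \<open>Bivariate polynomials in K[x1, xj] are represented as 'a poly poly:
  the outer variable is x_j, the inner (coefficient) variable is x_1.\<close>

definition eval2 :: "'a::comm_semiring_1 poly poly \<Rightarrow> 'a \<Rightarrow> 'a \<Rightarrow> 'a" where
  "eval2 G x1 xj = poly (poly G [:xj:]) x1"

definition lin2 :: "'a::comm_semiring_1 \<Rightarrow> 'a \<Rightarrow> 'a poly poly" where
  "lin2 a b = [:[:1, a:], [:b:]:]"

definition feval :: "nat \<Rightarrow> nat \<Rightarrow> 'a::comm_semiring_1 \<Rightarrow> (nat \<Rightarrow> nat \<Rightarrow> 'a) \<Rightarrow> (nat \<Rightarrow> nat)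
    \<Rightarrow> (nat \<Rightarrow> 'a) \<Rightarrow> 'a" where
  "feval n k lam l \<alpha> x = lam * (\<Prod>i\<in>{1..k}. (\<Sum>m\<in>{1..n}. l i m * x m) ^ \<alpha> i)"

definition pi_pt :: "nat \<Rightarrow> nat \<Rightarrow> 'a::zero_neq_one \<Rightarrow> 'a \<Rightarrow> nat \<Rightarrow> 'a" where
  "pi_pt n j x1 xj = (\<lambda>m. if m = 1 then x1 else if m = j then xj else if m = n then 1 else 0)"

end

theory Submission
  imports Defs
begin

(* Substituting pi_j turns f into g_j = lam * prod_i (l_i1 x_1 + l_ij x_j + 1)^alpha_i, and since K
   is infinite this identity of functions is an identity of polynomials.  Such a factorization into
   powers of distinct lines a x_1 + b x_j + 1 is unique: the zero set of the product is the union of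
   its lines, a line contained in finitely many lines over an infinite field is one of them, and once
   common factors are cancelled the exponents are forced to agree.  Hence every factorization
   returned for g_j is the given one permuted, and as the x_1-coefficients l_i1 are pairwise
   distinct they identify corresponding factors of g_j and g_j' for all j, j'. *)

lemma poly_eq_if_agree_on_infinite:
  fixes p q :: "'a::idom poly"
  assumes "infinite A" and "\<And>x. x \<in> A \<Longrightarrow> poly p x = poly q x"
  shows "p = q"
proof -
  have "A \<subseteq> {x. poly (p - q) x = 0}" using assms(2) by auto
  then have "infinite {x. poly (p - q) x = 0}" using assms(1) finite_subset by blast
  then have "p - q = 0" using poly_roots_finite by blast
  then show ?thesis by simp
qed

lemma eval2_power [simp]: "eval2 (p ^ m) x y = eval2 p x y ^ m"
  by (induct m) (simp_all add: eval2_def)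

lemma eval2_prod [simp]: "eval2 (\<Prod>i\<in>S. f i) x y = (\<Prod>i\<in>S. eval2 (f i) x y)"
  by (induct S rule: infinite_finite_induct) (simp_all add: eval2_def)

lemma eval2_smult [simp]: "eval2 (smult c p) x y = poly c x * eval2 p x y"
  by (simp add: eval2_def)

lemma eval2_lin2 [simp]: "eval2 (lin2 a b) x y = a * x + b * y + 1"
  by (simp add: eval2_def lin2_def algebra_simps)

lemma poly_poly_eqI:
  fixes P Q :: "'a::idom poly poly"
  assumes inf: "infinite (UNIV :: 'a set)" and eq: "\<And>x y. eval2 P x y = eval2 Q x y"
  shows "P = Q"
proof (rule poly_eq_if_agree_on_infinite)
  show "infinite (range (\<lambda>y::'a. [:y:]))"
    using inf by (auto dest: finite_imageD simp: inj_on_def)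
  show "poly P z = poly Q z" if "z \<in> range (\<lambda>y. [:y:])" for z
    using that eq inf by (auto simp: eval2_def intro: poly_eq_if_agree_on_infinite)
qed

lemma lin2_eq_iff: "lin2 a b = lin2 a' b' \<longleftrightarrow> a = a' \<and> b = b'"
  by (auto simp: lin2_def)

lemma lin2_nonzero: "lin2 a b \<noteq> 0"
  by (simp add: lin2_def)

lemma irreducible_lin2:
  fixes a b :: "'a::field"
  assumes "a \<noteq> 0"
  shows "irreducible (lin2 a b)"
proof (cases "b = 0")
  case True
  then show ?thesis
    using assms by (simp add: lin2_def irreducible_const_poly_iff irreducible_linear_field_poly)
next
  case False
  have const_factor_unit: "is_unit [:c:]" if "[:c:] * r = lin2 a b" for c r
  proof -
    have "c * coeff r 1 = [:b:]" using arg_cong[OF that, of "\<lambda>p. coeff p 1"] by (simp add: lin2_def)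
    then have "c dvd [:b:]" by (metis dvdI)
    moreover have "is_unit [:b:]" using False by (simp add: is_unit_const_poly_iff dvd_field_iff)
    ultimately show ?thesis by (simp add: is_unit_const_poly_iff dvd_unit_imp_unit)
  qed
  show ?thesis
  proof (rule irreducibleI)
    show "lin2 a b \<noteq> 0" by (rule lin2_nonzero)
    show "\<not> is_unit (lin2 a b)" using False by (auto simp: lin2_def is_unit_poly_iff)
    fix p q assume pq: "lin2 a b = p * q"
    then have "p \<noteq> 0" "q \<noteq> 0" using lin2_nonzero[of a b] by auto
    moreover have "degree (lin2 a b) = 1" using False by (simp add: lin2_def)
    ultimately have "degree p + degree q = 1" using pq by (simp add: degree_mult_eq)
    then consider "degree p = 0" | "degree q = 0" by linarith
    then show "is_unit p \<or> is_unit q"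
    proof cases
      case 1
      then show ?thesis using const_factor_unit[of "coeff p 0" q] pq by (metis degree_0_id)
    next
      case 2
      then show ?thesis using const_factor_unit[of "coeff q 0" p] pq by (metis degree_0_id mult.commute)
    qed
  qed
qed

lemma irreducible_lin2D:
  assumes "irreducible (lin2 a b)"
  shows "a \<noteq> 0 \<or> b \<noteq> 0"
  using assms by (auto simp: lin2_def one_pCons[symmetric])

lemma line_in_finite_union_of_lines:
  fixes a b :: "'a::field" and p q :: "'i \<Rightarrow> 'a"
  assumes inf: "infinite (UNIV :: 'a set)" and fin: "finite S" and nonconst: "a \<noteq> 0 \<or> b \<noteq> 0"
    and cover: "\<And>x y. a * x + b * y + 1 = 0 \<Longrightarrow> \<exists>i\<in>S. p i * x + q i * y + 1 = 0"
  shows "\<exists>i\<in>S. p i = a \<and> q i = b"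
proof -
  have *: "\<exists>i\<in>S. p i = a \<and> q i = b"
    if "a \<noteq> 0" and cover: "\<And>x y. a * x + b * y + 1 = 0 \<Longrightarrow> \<exists>i\<in>S. p i * x + q i * y + 1 = 0"
    for a b :: 'a and p q :: "'i \<Rightarrow> 'a"
  proof -
    (* (x, y) = (-(1 + b s) / a, s) runs through the line, and lies on line i iff factor i of R
       vanishes at s *)
    define R where "R = (\<Prod>i\<in>S. [:a - p i, a * q i - b * p i:])"
    have "poly R s = 0" for s
    proof -
      have "a * (- (1 + b * s) / a) + b * s + 1 = 0" using \<open>a \<noteq> 0\<close> by (simp add: field_simps)
      then obtain i where "i \<in> S" and "p i * (- (1 + b * s) / a) + q i * s + 1 = 0"
        using cover by blast
      then have "(a - p i) + (a * q i - b * p i) * s = 0"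
        using \<open>a \<noteq> 0\<close> by (simp add: field_simps)
      then show ?thesis
        unfolding R_def poly_prod using fin \<open>i \<in> S\<close> by (auto intro!: prod_zero simp: algebra_simps)
    qed
    then have "R = 0" using poly_eq_if_agree_on_infinite[OF inf, of R 0] by simp
    then obtain i where "i \<in> S" and "[:a - p i, a * q i - b * p i:] = 0"
      using fin unfolding R_def by (auto simp: prod_zero_iff)
    then show ?thesis using \<open>a \<noteq> 0\<close> by auto
  qed
  show ?thesis
  proof (cases "a = 0")
    case False
    then show ?thesis using * cover by blast
  next
    case True
    with nonconst have "b \<noteq> 0" by simp
    then show ?thesis using *[of b a q p] cover by (metis add.commute)
  qed
qed

lemma eval2_prod_lin2_eq_0_iff:
  fixes a b :: "'i \<Rightarrow> 'a::idom"
  assumes "finite S"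
  shows "eval2 (\<Prod>i\<in>S. lin2 (a i) (b i) ^ e i) x y = 0 \<longleftrightarrow> (\<exists>i\<in>S. 0 < e i \<and> a i * x + b i * y + 1 = 0)"
  using assms by (auto simp: prod_zero_iff)

lemma prod_lin2_vanishing_on_line:
  fixes a b :: "'a::field"
  assumes "infinite (UNIV :: 'a set)" and "finite S" and "a \<noteq> 0 \<or> b \<noteq> 0"
    and "\<And>x y. a * x + b * y + 1 = 0 \<Longrightarrow> eval2 (\<Prod>i\<in>S. lin2 (p i) (q i) ^ e i) x y = 0"
  shows "\<exists>i\<in>S. 0 < e i \<and> p i = a \<and> q i = b"
proof -
  have "\<exists>i\<in>{i\<in>S. 0 < e i}. p i = a \<and> q i = b"
  proof (rule line_in_finite_union_of_lines)
    fix x y assume "a * x + b * y + 1 = 0"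
    then show "\<exists>i\<in>{i\<in>S. 0 < e i}. p i * x + q i * y + 1 = 0"
      using assms(2,4) by (auto simp: eval2_prod_lin2_eq_0_iff)
  qed (use assms in auto)
  then show ?thesis by auto
qed

lemma prod_lin2_exponents_unique:
  fixes a b :: "'i \<Rightarrow> 'a::field"
  assumes inf: "infinite (UNIV :: 'a set)" and fin: "finite S"
    and nonconst: "\<forall>i\<in>S. a i \<noteq> 0 \<or> b i \<noteq> 0" and inj: "inj_on (\<lambda>i. lin2 (a i) (b i)) S"
    and eq: "(\<Prod>i\<in>S. lin2 (a i) (b i) ^ \<beta> i) = (\<Prod>i\<in>S. lin2 (a i) (b i) ^ \<gamma> i)"
    and "i \<in> S"
  shows "\<beta> i = \<gamma> i"
proof -
  let ?P = "\<lambda>e. \<Prod>i\<in>S. lin2 (a i) (b i) ^ e i"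
  have pos: "0 < e' t" if "?P e = ?P e'" and "t \<in> S" and "0 < e t" for e e' t
  proof -
    have "\<exists>s\<in>S. 0 < e' s \<and> a s = a t \<and> b s = b t"
    proof (rule prod_lin2_vanishing_on_line[OF inf fin])
      show "a t \<noteq> 0 \<or> b t \<noteq> 0" using nonconst \<open>t \<in> S\<close> by blast
      show "eval2 (?P e') x y = 0" if "a t * x + b t * y + 1 = 0" for x y
        using that \<open>t \<in> S\<close> \<open>0 < e t\<close> eval2_prod_lin2_eq_0_iff[OF fin, of a b e x y]
        unfolding \<open>?P e = ?P e'\<close> by blast
    qed
    then obtain s where "s \<in> S" "0 < e' s" "lin2 (a s) (b s) = lin2 (a t) (b t)" by auto
    moreover from this inj \<open>t \<in> S\<close> have "s = t" unfolding inj_on_def by blast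
    ultimately show ?thesis by simp
  qed
  (* after cancelling the common factor with exponents min (\<beta> t) (\<gamma> t), one side has
     exponent 0 at i, so by pos the other side has too *)
  define m where "m t = min (\<beta> t) (\<gamma> t)" for t
  have split: "?P e = ?P m * ?P (\<lambda>t. e t - m t)" if "\<forall>t\<in>S. m t \<le> e t" for e
    unfolding prod.distrib[symmetric] power_add[symmetric] using that by (intro prod.cong) auto
  have "?P m \<noteq> 0" using fin by (simp add: prod_zero_iff lin2_nonzero)
  then have reduced: "?P (\<lambda>t. \<beta> t - m t) = ?P (\<lambda>t. \<gamma> t - m t)"
    using eq split[of \<beta>] split[of \<gamma>] by (simp add: m_def)
  show ?thesis
    using pos[OF reduced \<open>i \<in> S\<close>] pos[OF reduced[symmetric] \<open>i \<in> S\<close>] unfolding m_def by linarith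
qed

definition lin2_factorization ::
    "'a::field poly poly \<Rightarrow> 'i set \<Rightarrow> 'a \<Rightarrow> ('i \<Rightarrow> 'a) \<Rightarrow> ('i \<Rightarrow> 'a) \<Rightarrow> ('i \<Rightarrow> nat) \<Rightarrow> bool" where
  "lin2_factorization G S \<mu> a b \<beta> \<longleftrightarrow>
     G = [:[:\<mu>:]:] * (\<Prod>i\<in>S. lin2 (a i) (b i) ^ \<beta> i)
     \<and> (\<forall>i\<in>S. irreducible (lin2 (a i) (b i)) \<and> \<beta> i \<ge> 1)
     \<and> (\<forall>i\<in>S. \<forall>i'\<in>S. i \<noteq> i' \<longrightarrow> lin2 (a i) (b i) \<noteq> lin2 (a i') (b i'))"

lemma lin2_factorization_unique:
  fixes a b p q :: "'i \<Rightarrow> 'a::field"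
  assumes inf: "infinite (UNIV :: 'a set)" and fin: "finite S"
    and fact: "lin2_factorization G S \<mu> a b \<beta>"
    and G: "G = [:[:d:]:] * (\<Prod>i\<in>S. lin2 (p i) (q i) ^ \<alpha> i)" and "d \<noteq> 0"
  shows "\<mu> = d \<and> (\<exists>f. bij_betw f S S \<and> (\<forall>i\<in>S. p (f i) = a i \<and> q (f i) = b i \<and> \<alpha> (f i) = \<beta> i))"
proof -
  let ?A = "\<Prod>i\<in>S. lin2 (a i) (b i) ^ \<beta> i"
  from fact have G_A: "G = [:[:\<mu>:]:] * ?A" and pos: "\<forall>i\<in>S. 1 \<le> \<beta> i"
    and nonconst: "\<forall>i\<in>S. a i \<noteq> 0 \<or> b i \<noteq> 0" and inj: "inj_on (\<lambda>i. lin2 (a i) (b i)) S"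
    unfolding lin2_factorization_def inj_on_def by (auto dest: irreducible_lin2D)
  have "eval2 G 0 0 = \<mu>" using G_A by simp
  moreover have "eval2 G 0 0 = d" using G by simp
  ultimately have "\<mu> = d" by simp
  have "\<exists>t\<in>S. 0 < \<alpha> t \<and> p t = a i \<and> q t = b i" if "i \<in> S" for i
  proof (rule prod_lin2_vanishing_on_line[OF inf fin])
    show "a i \<noteq> 0 \<or> b i \<noteq> 0" using nonconst that by blast
    fix x y assume "a i * x + b i * y + 1 = 0"
    then have "eval2 G x y = 0" using G_A pos that fin by (auto simp: prod_zero_iff)
    then show "eval2 (\<Prod>i\<in>S. lin2 (p i) (q i) ^ \<alpha> i) x y = 0" using G \<open>d \<noteq> 0\<close> by simp
  qed
  then obtain f where f: "\<forall>i\<in>S. f i \<in> S \<and> p (f i) = a i \<and> q (f i) = b i" by metis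
  have "inj_on f S"
  proof (rule inj_onI)
    fix i i' assume "i \<in> S" "i' \<in> S" "f i = f i'"
    then have "lin2 (a i) (b i) = lin2 (a i') (b i')" using f by metis
    with inj \<open>i \<in> S\<close> \<open>i' \<in> S\<close> show "i = i'" by (meson inj_onD)
  qed
  then have bij: "bij_betw f S S" using f fin by (simp add: bij_betw_def endo_inj_surj image_subsetI)
  have "(\<Prod>t\<in>S. lin2 (p t) (q t) ^ \<alpha> t) = (\<Prod>i\<in>S. lin2 (p (f i)) (q (f i)) ^ \<alpha> (f i))"
    using prod.reindex_bij_betw[OF bij, of "\<lambda>t. lin2 (p t) (q t) ^ \<alpha> t"] by simp
  also have "\<dots> = (\<Prod>i\<in>S. lin2 (a i) (b i) ^ \<alpha> (f i))" using f by (intro prod.cong) auto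
  finally have "smult [:d:] ?A = smult [:d:] (\<Prod>i\<in>S. lin2 (a i) (b i) ^ \<alpha> (f i))"
    using G_A G \<open>\<mu> = d\<close> by simp
  moreover have "[:d:] \<noteq> 0" using \<open>d \<noteq> 0\<close> by simp
  ultimately have "?A = (\<Prod>i\<in>S. lin2 (a i) (b i) ^ \<alpha> (f i))" by (rule smult_cancel[rotated])
  then have "\<beta> i = \<alpha> (f i)" if "i \<in> S" for i by (rule prod_lin2_exponents_unique[OF inf fin nonconst inj _ that])
  then show ?thesis using \<open>\<mu> = d\<close> bij f by auto
qed

definition aligning_reordering :: "'j set \<Rightarrow> 'i set \<Rightarrow> ('j \<Rightarrow> 'i \<Rightarrow> 'b) \<Rightarrow> ('j \<Rightarrow> 'i \<Rightarrow> 'i) \<Rightarrow> bool" where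
  "aligning_reordering J S a \<sigma> \<longleftrightarrow>
     (\<forall>j\<in>J. bij_betw (\<sigma> j) S S) \<and> (\<forall>j\<in>J. \<forall>j'\<in>J. \<forall>i\<in>S. a j (\<sigma> j i) = a j' (\<sigma> j' i))"

lemma aligning_reordering_exists:
  assumes F: "\<forall>j\<in>J. bij_betw (F j) S S \<and> (\<forall>i\<in>S. p (F j i) = a j i)"
  shows "\<exists>\<sigma>. aligning_reordering J S a \<sigma>"
proof
  have a_inv: "a j (inv_into S (F j) i) = p i" if "j \<in> J" "i \<in> S" for j i
  proof -
    from F \<open>j \<in> J\<close> have bij: "bij_betw (F j) S S" and p: "\<forall>i\<in>S. p (F j i) = a j i" by auto
    have "inv_into S (F j) i \<in> S" and "F j (inv_into S (F j) i) = i"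
      using bij \<open>i \<in> S\<close> by (auto simp: bij_betw_def inv_into_into f_inv_into_f)
    then show ?thesis using p by metis
  qed
  show "aligning_reordering J S a (\<lambda>j. inv_into S (F j))"
    unfolding aligning_reordering_def using F a_inv by (simp add: bij_betw_inv_into)
qed

lemma aligning_reordering_unique:
  assumes F: "\<forall>j\<in>J. bij_betw (F j) S S \<and> (\<forall>i\<in>S. p (F j i) = a j i)" and "inj_on p S"
    and \<sigma>: "aligning_reordering J S a \<sigma>" and "j\<^sub>0 \<in> J"
  shows "\<exists>\<tau>. bij_betw \<tau> S S \<and> (\<forall>j\<in>J. \<forall>i\<in>S. \<sigma> j i \<in> S \<and> F j (\<sigma> j i) = \<tau> i)"
proof -
  from \<sigma> have \<sigma>_bij: "\<forall>j\<in>J. bij_betw (\<sigma> j) S S"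
    and aligned: "\<forall>j\<in>J. \<forall>j'\<in>J. \<forall>i\<in>S. a j (\<sigma> j i) = a j' (\<sigma> j' i)"
    unfolding aligning_reordering_def by blast+
  have "\<sigma> j i \<in> S \<and> F j (\<sigma> j i) = F j\<^sub>0 (\<sigma> j\<^sub>0 i)" if "j \<in> J" "i \<in> S" for j i
  proof -
    have "\<sigma> j i \<in> S" "\<sigma> j\<^sub>0 i \<in> S"
      using \<sigma>_bij that \<open>j\<^sub>0 \<in> J\<close> by (meson bij_betw_apply)+
    moreover from this have "F j (\<sigma> j i) \<in> S" "F j\<^sub>0 (\<sigma> j\<^sub>0 i) \<in> S"
      and "p (F j (\<sigma> j i)) = p (F j\<^sub>0 (\<sigma> j\<^sub>0 i))"
      using F aligned that \<open>j\<^sub>0 \<in> J\<close> by (metis bij_betw_apply)+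
    ultimately show ?thesis using \<open>inj_on p S\<close> by (simp add: inj_on_eq_iff)
  qed
  moreover have "bij_betw (F j\<^sub>0 \<circ> \<sigma> j\<^sub>0) S S"
    using F \<sigma>_bij \<open>j\<^sub>0 \<in> J\<close> bij_betw_trans by blast
  ultimately show ?thesis by auto
qed

lemma feval_pi_pt:
  fixes l :: "nat \<Rightarrow> nat \<Rightarrow> 'a::comm_semiring_1"
  assumes "1 < j" "j < n"
  shows "feval n k lam l \<alpha> (pi_pt n j x y) = lam * (\<Prod>i\<in>{1..k}. (l i 1 * x + l i j * y + l i n) ^ \<alpha> i)"
proof -
  have "(\<Sum>m\<in>{1..n}. l i m * pi_pt n j x y m) = l i 1 * x + l i j * y + l i n" for i
  proof -
    have "(\<Sum>m\<in>{1..n}. l i m * pi_pt n j x y m) =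
          (\<Sum>m\<in>{1..n}. (if m = 1 then l i 1 * x else 0) + (if m = j then l i j * y else 0)
                         + (if m = n then l i n else 0))"
      using assms by (intro sum.cong) (auto simp: pi_pt_def)
    also have "\<dots> = l i 1 * x + l i j * y + l i n"
      using assms by (simp add: sum.distrib)
    finally show ?thesis .
  qed
  then show ?thesis by (simp add: feval_def)
qed

lemma substituted_factorization:
  fixes l :: "nat \<Rightarrow> nat \<Rightarrow> 'a::field"
  assumes "infinite (UNIV :: 'a set)" and "1 < j" "j < n"
    and "\<forall>x y. eval2 g x y = feval n k lam l \<alpha> (pi_pt n j x y)" and "\<forall>i\<in>{1..k}. l i n = 1"
  shows "g = [:[:lam:]:] * (\<Prod>i\<in>{1..k}. lin2 (l i 1) (l i j) ^ \<alpha> i)"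
  using assms by (intro poly_poly_eqI) (simp_all add: feval_pi_pt)

theorem proposition7:
  fixes n k :: nat and lam :: "'a::field" and l :: "nat \<Rightarrow> nat \<Rightarrow> 'a" and \<alpha> :: "nat \<Rightarrow> nat"
    and G :: "nat \<Rightarrow> 'a poly poly"
  assumes inf: "infinite (UNIV :: 'a set)"
    and n4: "n \<ge> 4"
    and lam: "lam \<noteq> 0"
    and alpha_pos: "\<forall>i\<in>{1..k}. \<alpha> i \<ge> 1"
    and nonprop: "\<forall>i\<in>{1..k}. \<forall>i'\<in>{1..k}. i \<noteq> i' \<longrightarrow>
                    \<not> (\<exists>c. \<forall>m\<in>{1..n}. l i m = c * l i' m)"
    and distinct1: "\<forall>i\<in>{1..k}. \<forall>i'\<in>{1..k}. i \<noteq> i' \<longrightarrow> l i 1 \<noteq> l i' 1"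
    and nonzero1: "\<forall>i\<in>{1..k}. l i 1 \<noteq> 0"
    and lastone: "\<forall>i\<in>{1..k}. l i n = 1"
    \<comment> \<open>Step 1: G j is the (dense) bivariate polynomial g_j = f \<circ> pi_j\<close>
    and step1: "\<forall>j\<in>{2..n-1}. \<forall>x1 xj. eval2 (G j) x1 xj = feval n k lam l \<alpha> (pi_pt n j x1 xj)"
  shows
    \<comment> \<open>Step 2 is possible: each g_j factors into irreducibles of the displayed shape\<close>
    "(\<forall>j\<in>{2..n-1}. \<exists>(\<mu>::'a) (a::nat \<Rightarrow> 'a) (b::nat \<Rightarrow> 'a) (\<beta>::nat \<Rightarrow> nat).
        G j = [:[:\<mu>:]:] * (\<Prod>i\<in>{1..k}. lin2 (a i) (b i) ^ \<beta> i)
        \<and> (\<forall>i\<in>{1..k}. irreducible (lin2 (a i) (b i)) \<and> \<beta> i \<ge> 1)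
        \<and> (\<forall>i\<in>{1..k}. \<forall>i'\<in>{1..k}. i \<noteq> i' \<longrightarrow> lin2 (a i) (b i) \<noteq> lin2 (a i') (b i')))
   \<and>
    \<comment> \<open>for any such factorizations returned in Step 2 ...\<close>
    (\<forall>(\<mu>::nat \<Rightarrow> 'a) (a::nat \<Rightarrow> nat \<Rightarrow> 'a) (b::nat \<Rightarrow> nat \<Rightarrow> 'a) (\<beta>::nat \<Rightarrow> nat \<Rightarrow> nat).
      (\<forall>j\<in>{2..n-1}.
        G j = [:[:\<mu> j:]:] * (\<Prod>i\<in>{1..k}. lin2 (a j i) (b j i) ^ \<beta> j i)
        \<and> (\<forall>i\<in>{1..k}. irreducible (lin2 (a j i) (b j i)) \<and> \<beta> j i \<ge> 1)
        \<and> (\<forall>i\<in>{1..k}. \<forall>i'\<in>{1..k}. i \<noteq> i' \<longrightarrow> lin2 (a j i) (b j i) \<noteq> lin2 (a j i') (b j i')))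
      \<longrightarrow>
      \<comment> \<open>... Step 3 is possible: a reordering aligning the x_1-coefficients exists ...\<close>
      (\<exists>\<sigma>::nat \<Rightarrow> nat \<Rightarrow> nat. (\<forall>j\<in>{2..n-1}. bij_betw (\<sigma> j) {1..k} {1..k})
          \<and> (\<forall>j\<in>{2..n-1}. \<forall>j'\<in>{2..n-1}. \<forall>i\<in>{1..k}. a j (\<sigma> j i) = a j' (\<sigma> j' i)))
      \<and>
      \<comment> \<open>... and for every such reordering, exponents agree and the output of Step 4
          is the given factorization up to permutation of the factors\<close>
      (\<forall>\<sigma>::nat \<Rightarrow> nat \<Rightarrow> nat. (\<forall>j\<in>{2..n-1}. bij_betw (\<sigma> j) {1..k} {1..k})
          \<and> (\<forall>j\<in>{2..n-1}. \<forall>j'\<in>{2..n-1}. \<forall>i\<in>{1..k}. a j (\<sigma> j i) = a j' (\<sigma> j' i))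
        \<longrightarrow>
          (\<forall>j\<in>{2..n-1}. \<forall>j'\<in>{2..n-1}. \<forall>i\<in>{1..k}. \<beta> j (\<sigma> j i) = \<beta> j' (\<sigma> j' i))
          \<and> (\<forall>j\<in>{2..n-1}. \<mu> j = lam)
          \<and> (\<exists>\<tau>. bij_betw \<tau> {1..k} {1..k} \<and>
               (\<forall>i\<in>{1..k}. \<beta> 2 (\<sigma> 2 i) = \<alpha> (\<tau> i)
                  \<and> a 2 (\<sigma> 2 i) = l (\<tau> i) 1
                  \<and> (\<forall>j\<in>{2..n-1}. b j (\<sigma> j i) = l (\<tau> i) j)
                  \<and> l (\<tau> i) n = 1))))"
proof -
  have G: "G j = [:[:lam:]:] * (\<Prod>i\<in>{1..k}. lin2 (l i 1) (l i j) ^ \<alpha> i)" if "j \<in> {2..n-1}" for j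
    using that n4 step1 lastone by (intro substituted_factorization[OF inf]) auto
  have fact: "lin2_factorization (G j) {1..k} lam (\<lambda>i. l i 1) (\<lambda>i. l i j) \<alpha>" if "j \<in> {2..n-1}" for j
    using G[OF that] irreducible_lin2 nonzero1 alpha_pos distinct1
    unfolding lin2_factorization_def by (auto simp: lin2_eq_iff)
  have inj: "inj_on (\<lambda>i. l i 1) {1..k}" using distinct1 by (auto intro: inj_onI)
  show ?thesis
    unfolding lin2_factorization_def[symmetric] aligning_reordering_def[symmetric]
  proof (intro conjI allI impI)
    show "\<forall>j\<in>{2..n-1}. \<exists>\<mu> a b \<beta>. lin2_factorization (G j) {1..k} \<mu> a b \<beta>" using fact by blast
    fix \<mu> a b \<beta>
    assume H: "\<forall>j\<in>{2..n-1}. lin2_factorization (G j) {1..k} (\<mu> j) (a j) (b j) (\<beta> j)"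
    have "\<forall>j\<in>{2..n-1}. \<mu> j = lam \<and> (\<exists>f. bij_betw f {1..k} {1..k} \<and>
            (\<forall>i\<in>{1..k}. l (f i) 1 = a j i \<and> l (f i) j = b j i \<and> \<alpha> (f i) = \<beta> j i))"
      using lin2_factorization_unique[OF inf _ H[rule_format] G lam] by simp
    then obtain F where F: "\<forall>j\<in>{2..n-1}. bij_betw (F j) {1..k} {1..k} \<and>
            (\<forall>i\<in>{1..k}. l (F j i) 1 = a j i \<and> l (F j i) j = b j i \<and> \<alpha> (F j i) = \<beta> j i)"
      and \<mu>: "\<forall>j\<in>{2..n-1}. \<mu> j = lam"
      by (metis bchoice)
    show "\<exists>\<sigma>. aligning_reordering {2..n-1} {1..k} a \<sigma>"
      using F by (intro aligning_reordering_exists[where p = "\<lambda>t. l t 1" and F = F]) simp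
    fix \<sigma> assume \<sigma>: "aligning_reordering {2..n-1} {1..k} a \<sigma>"
    have "2 \<in> {2..n-1}" using n4 by simp
    then obtain \<tau> where \<tau>: "bij_betw \<tau> {1..k} {1..k}"
      and F\<sigma>: "\<forall>j\<in>{2..n-1}. \<forall>i\<in>{1..k}. \<sigma> j i \<in> {1..k} \<and> F j (\<sigma> j i) = \<tau> i"
      using aligning_reordering_unique[OF _ inj \<sigma>] F by blast
    with F have match: "\<forall>j\<in>{2..n-1}. \<forall>i\<in>{1..k}.
        \<beta> j (\<sigma> j i) = \<alpha> (\<tau> i) \<and> a j (\<sigma> j i) = l (\<tau> i) 1 \<and> b j (\<sigma> j i) = l (\<tau> i) j"
      by metis
    show "\<forall>j\<in>{2..n-1}. \<forall>j'\<in>{2..n-1}. \<forall>i\<in>{1..k}. \<beta> j (\<sigma> j i) = \<beta> j' (\<sigma> j' i)"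
      using match by simp
    show "\<forall>j\<in>{2..n-1}. \<mu> j = lam" using \<mu> .
    show "\<exists>\<tau>. bij_betw \<tau> {1..k} {1..k} \<and>
            (\<forall>i\<in>{1..k}. \<beta> 2 (\<sigma> 2 i) = \<alpha> (\<tau> i) \<and> a 2 (\<sigma> 2 i) = l (\<tau> i) 1
               \<and> (\<forall>j\<in>{2..n-1}. b j (\<sigma> j i) = l (\<tau> i) j) \<and> l (\<tau> i) n = 1)"
      using \<tau> match \<open>2 \<in> {2..n-1}\<close> lastone bij_betw_apply[OF \<tau>]
      by (intro exI[of _ \<tau>]) auto
  qed
qed

end
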